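(* Let $W$ be a real vector space, $e_1,\dots,e_n\in W$ and $\phi_1,\dots,\phi_n\in\operatorname{Hom}_{\mathbb{R}}(W,\mathbb{R})$ such that (a) $\{(a_1,\dots,a_n)\in\mathbb{R}_{\ge0}^n:a_1e_1+\cdots+a_ne_n=0\}=\{0\}$; (b) $\phi_i(e_j)\ge0$ for all $i\neq j$; (c) $\{x\in\mathbb{R}_{\ge0}e_1+\cdots+\mathbb{R}_{\ge0}e_n:\phi_i(x)\ge0\text{ for all }i\}=\{0\}$. Then: (1) for $Q=(\phi_i(e_j))_{i,j}$ there are $n\times n$ matrices $A$ (lower triangular) and $B$ (upper triangular) with non-negative entries, $\det A>0$, $\det B>0$ and $AQB=-I_n$; moreover, if $Q$ is symmetric one can take $B={}^tA$; (2) $e_1,\dots,e_n$ are linearly independent in $W/\{x\in W:\phi_1(x)=\cdots=\phi_n(x)=0\}$. *)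

theory Defs
  imports Complex_Main "Jordan_Normal_Form.Determinant"
begin

definition lower_triangular :: "'a::zero mat \<Rightarrow> bool" where
  "lower_triangular A \<equiv> \<forall>i < dim_row A. \<forall>j < dim_col A. i < j \<longrightarrow> A $$ (i,j) = 0"

definition nonneg_mat :: "real mat \<Rightarrow> bool" where
  "nonneg_mat A \<equiv> \<forall>i < dim_row A. \<forall>j < dim_col A. A $$ (i,j) \<ge> 0"

end

theory Submission
  imports Defs
begin

text \<open>By (b) the matrix \<open>Q = (\<phi>\<^sub>i(e\<^sub>j))\<close> has non-negative off-diagonal entries, and by (a) and (c) no
  non-zero vector \<open>v \<ge> 0\<close> satisfies \<open>Q v \<ge> 0\<close>; that is, \<open>-Q\<close> is a nonsingular M-matrix. Then the pivot
  \<open>q\<^sub>1\<^sub>1\<close> is negative (otherwise \<open>v = e\<^sub>1\<close> would do), and eliminating it on both sides by non-negative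
  triangular matrices leaves a Schur complement \<open>q\<^sub>i\<^sub>j - q\<^sub>i\<^sub>1 q\<^sub>1\<^sub>j / q\<^sub>1\<^sub>1\<close> with the same two properties.
  Induction yields \<open>A Q B = -1\<close>, with \<open>B = A\<^sup>T\<close> if \<open>Q\<close> is symmetric; in particular \<open>Q\<close> is
  invertible, which is (2).\<close>

lemma lower_triangular_mult:
  fixes A B :: "'a::semiring_0 mat"
  assumes "A \<in> carrier_mat n n" "B \<in> carrier_mat n n" "lower_triangular A" "lower_triangular B"
  shows "lower_triangular (A * B)"
  unfolding lower_triangular_def
proof (intro allI impI)
  fix i j assume ij: "i < dim_row (A * B)" "j < dim_col (A * B)" "i < j"
  have "A $$ (i,l) * B $$ (l,j) = 0" if "l < n" for l
    using assms ij that by (cases "l \<le> i") (auto simp: lower_triangular_def)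
  then show "(A * B) $$ (i,j) = 0"
    using assms ij by (auto simp: scalar_prod_def intro!: sum.neutral)
qed

lemma nonneg_mat_mult:
  assumes "A \<in> carrier_mat n n" "B \<in> carrier_mat n n" "nonneg_mat A" "nonneg_mat B"
  shows "nonneg_mat (A * B)"
  using assms unfolding nonneg_mat_def by (auto simp: scalar_prod_def intro!: sum_nonneg)

lemma det_lower_triangular_pos:
  fixes A :: "'a::linordered_idom mat"
  assumes "A \<in> carrier_mat n n" "lower_triangular A" "\<And>i. i < n \<Longrightarrow> 0 < A $$ (i,i)"
  shows "0 < det A"
  using assms by (subst det_lower_triangular[of n])
    (auto simp: lower_triangular_def prod_list_diag_prod intro!: prod_pos)

lemma mult_transpose_mult_assoc:
  fixes Q :: "'a::comm_semiring_0 mat"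
  assumes "L1 \<in> carrier_mat n n" "R1 \<in> carrier_mat n n" "L2 \<in> carrier_mat n n"
    "R2 \<in> carrier_mat n n" "Q \<in> carrier_mat n n"
  shows "(L2 * L1) * Q * (R2 * R1)\<^sup>T = L2 * (L1 * Q * R1\<^sup>T) * R2\<^sup>T"
  using assms by (simp add: transpose_mult[of R2 n n R1 n] assoc_mult_mat[of _ n n _ n _ n])

lemma det_nonzero_of_factorization:
  fixes Q :: "'a::idom mat"
  assumes "A \<in> carrier_mat n n" "Q \<in> carrier_mat n n" "B \<in> carrier_mat n n"
    and "A * Q * B = - 1\<^sub>m n"
  shows "det Q \<noteq> 0"
proof -
  have "- 1\<^sub>m n = (-1 :: 'a) \<cdot>\<^sub>m 1\<^sub>m n"
    by (intro eq_matI) auto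
  then have "det (A * Q * B) \<noteq> 0"
    using assms(4) by simp
  then show ?thesis
    using assms(1-3) by (simp add: det_mult[of _ n])
qed

lemma mult_mat_vec_minus_unit_row:
  fixes M :: "'a::comm_ring_1 mat"
  assumes "M \<in> carrier_mat n n" "v \<in> carrier_vec n" "i < n"
    and "\<And>j. j < n \<Longrightarrow> M $$ (i,j) = (if i = j then -1 else 0)"
  shows "(M *\<^sub>v v) $ i = - v $ i"
proof -
  have "(M *\<^sub>v v) $ i = (\<Sum>j\<in>{0..<n}. M $$ (i,j) * v $ j)"
    using assms by (simp add: scalar_prod_def)
  also have "\<dots> = (\<Sum>j\<in>{0..<n}. if j = i then - v $ j else 0)"
    using assms(4) by (intro sum.cong) auto
  also have "\<dots> = - v $ i"
    using assms(3) by simp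
  finally show ?thesis .
qed

definition nonneg_lower_tri :: "nat \<Rightarrow> real mat \<Rightarrow> bool" where
  "nonneg_lower_tri n L \<longleftrightarrow>
     L \<in> carrier_mat n n \<and> lower_triangular L \<and> nonneg_mat L \<and> 0 < det L"

lemma nonneg_lower_tri_one: "nonneg_lower_tri n (1\<^sub>m n)"
  by (auto simp: nonneg_lower_tri_def lower_triangular_def nonneg_mat_def)

lemma nonneg_lower_tri_mult:
  assumes "nonneg_lower_tri n A" "nonneg_lower_tri n B"
  shows "nonneg_lower_tri n (A * B)"
  using assms lower_triangular_mult[of A n B] nonneg_mat_mult[of A n B] det_mult[of A n B]
  by (auto simp: nonneg_lower_tri_def)

lemma nonneg_lower_tri_transpose:
  assumes "nonneg_lower_tri n L"
  shows "L\<^sup>T \<in> carrier_mat n n \<and> upper_triangular L\<^sup>T \<and> nonneg_mat L\<^sup>T \<and> 0 < det L\<^sup>T"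
  using assms det_transpose[of L n]
  by (auto simp: nonneg_lower_tri_def lower_triangular_def nonneg_mat_def)

definition metzler :: "real mat \<Rightarrow> bool" where
  "metzler Q \<longleftrightarrow> (\<forall>i<dim_row Q. \<forall>j<dim_col Q. i \<noteq> j \<longrightarrow> 0 \<le> Q $$ (i,j))"

lemma metzler_transpose [simp]: "metzler Q\<^sup>T \<longleftrightarrow> metzler Q"
  by (auto simp: metzler_def)

text \<open>For a Metzler matrix \<open>Q\<close> this says that \<open>-Q\<close> is a nonsingular M-matrix.\<close>

definition no_nonneg_supersolution :: "real mat \<Rightarrow> bool" where
  "no_nonneg_supersolution Q \<longleftrightarrow>
     (\<forall>v \<in> carrier_vec (dim_col Q). (\<forall>j<dim_col Q. 0 \<le> v $ j) \<longrightarrow>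
        (\<forall>i<dim_row Q. 0 \<le> (Q *\<^sub>v v) $ i) \<longrightarrow> v = 0\<^sub>v (dim_col Q))"

lemma no_nonneg_supersolutionD:
  assumes "no_nonneg_supersolution Q" "Q \<in> carrier_mat n n" "v \<in> carrier_vec n"
    and "\<And>j. j < n \<Longrightarrow> 0 \<le> v $ j" "\<And>i. i < n \<Longrightarrow> 0 \<le> (Q *\<^sub>v v) $ i"
  shows "v = 0\<^sub>v n"
  using assms unfolding no_nonneg_supersolution_def by blast

lemma metzler_diag_neg:
  assumes Q: "Q \<in> carrier_mat n n" and k: "k < n"
    and "metzler Q" "no_nonneg_supersolution Q"
  shows "Q $$ (k,k) < 0"
proof (rule ccontr)
  assume "\<not> Q $$ (k,k) < 0"
  then have "0 \<le> (Q *\<^sub>v unit_vec n k) $ i" if "i < n" for i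
    using assms that by (cases "i = k") (auto simp: metzler_def)
  then have "unit_vec n k = (0\<^sub>v n :: real vec)"
    using assms by (intro no_nonneg_supersolutionD[of Q n]) auto
  then show False
    using k by (metis index_unit_vec(1) index_zero_vec(1) zero_neq_one)
qed

definition cleared_upto :: "nat \<Rightarrow> real mat \<Rightarrow> bool" where
  "cleared_upto k Q \<longleftrightarrow>
     (\<forall>i<dim_row Q. \<forall>j<dim_col Q. (i < k \<or> j < k) \<longrightarrow> Q $$ (i,j) = (if i = j then -1 else 0))"

definition schur_step :: "real mat \<Rightarrow> nat \<Rightarrow> real mat" where
  "schur_step Q k = mat (dim_row Q) (dim_col Q) (\<lambda>(i,j).
     if i \<le> k \<or> j \<le> k then (if i = j then -1 else 0)
     else Q $$ (i,j) - Q $$ (i,k) * Q $$ (k,j) / Q $$ (k,k))"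

lemma cleared_upto_schur_step: "cleared_upto (Suc k) (schur_step Q k)"
  by (auto simp: cleared_upto_def schur_step_def)

lemma cleared_upto_all:
  assumes "Q \<in> carrier_mat n n" "cleared_upto n Q"
  shows "Q = - 1\<^sub>m n"
  using assms by (intro eq_matI) (auto simp: cleared_upto_def)

lemma schur_step_transpose: "(schur_step Q k)\<^sup>T = schur_step Q\<^sup>T k"
  by (auto simp: schur_step_def)

lemma metzler_schur_step:
  assumes "metzler Q" "Q $$ (k,k) < 0" "k < dim_row Q" "k < dim_col Q"
  shows "metzler (schur_step Q k)"
  unfolding metzler_def
proof (intro allI impI)
  fix i j assume ij: "i < dim_row (schur_step Q k)" "j < dim_col (schur_step Q k)" "i \<noteq> j"
  show "0 \<le> schur_step Q k $$ (i,j)"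
  proof (cases "i \<le> k \<or> j \<le> k")
    case False
    then have "0 \<le> Q $$ (i,k) * Q $$ (k,j)" "0 \<le> Q $$ (i,j)"
      using assms ij by (auto simp: metzler_def schur_step_def)
    then have "Q $$ (i,k) * Q $$ (k,j) / Q $$ (k,k) \<le> 0"
      using assms(2) by (simp add: divide_nonneg_neg)
    then show ?thesis
      using False ij \<open>0 \<le> Q $$ (i,j)\<close> by (auto simp: schur_step_def)
  qed (use ij in \<open>auto simp: schur_step_def\<close>)
qed

lemma index_schur_step_mult_vec:
  assumes Q: "Q \<in> carrier_mat n n" and v: "v \<in> carrier_vec n"
    and v_low: "\<And>j. j \<le> k \<Longrightarrow> v $ j = 0" and i: "k < i" "i < n"
  shows "(schur_step Q k *\<^sub>v v) $ i = (Q *\<^sub>v v) $ i - Q $$ (i,k) / Q $$ (k,k) * (Q *\<^sub>v v) $ k"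
proof -
  have "(Q *\<^sub>v v) $ i - Q $$ (i,k) / Q $$ (k,k) * (Q *\<^sub>v v) $ k
      = (\<Sum>j\<in>{0..<n}. (Q $$ (i,j) - Q $$ (i,k) / Q $$ (k,k) * Q $$ (k,j)) * v $ j)"
    using Q v i by (simp add: scalar_prod_def sum_subtractf sum_distrib_left algebra_simps)
  also have "\<dots> = (\<Sum>j\<in>{0..<n}. schur_step Q k $$ (i,j) * v $ j)"
  proof (rule sum.cong)
    fix j assume "j \<in> {0..<n}"
    then show "(Q $$ (i,j) - Q $$ (i,k) / Q $$ (k,k) * Q $$ (k,j)) * v $ j = schur_step Q k $$ (i,j) * v $ j"
      using Q i v_low[of j] by (cases "k < j") (auto simp: schur_step_def)
  qed simp
  also have "\<dots> = (schur_step Q k *\<^sub>v v) $ i"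
    using Q v i by (simp add: scalar_prod_def schur_step_def)
  finally show ?thesis ..
qed

text \<open>The multiple \<open>t\<close> of \<open>e\<^sub>k\<close> is chosen to make the \<open>k\<close>-th entry of \<open>Q (v + t e\<^sub>k)\<close> vanish; the
  entries below \<open>k\<close> are then those of \<open>schur_step Q k *\<^sub>v v\<close>.\<close>

lemma schur_step_supersolution_lift:
  assumes Q: "Q \<in> carrier_mat n n" and k: "k < n" and cl: "cleared_upto k Q"
    and mz: "metzler Q" and q: "Q $$ (k,k) < 0"
    and v: "v \<in> carrier_vec n" and v_nonneg: "\<And>j. j < n \<Longrightarrow> 0 \<le> v $ j"
    and v_low: "\<And>j. j \<le> k \<Longrightarrow> v $ j = 0"
    and Sv_nonneg: "\<And>i. k < i \<Longrightarrow> i < n \<Longrightarrow> 0 \<le> (schur_step Q k *\<^sub>v v) $ i"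
  obtains t where "0 \<le> t" "\<And>i. i < n \<Longrightarrow> 0 \<le> (Q *\<^sub>v (v + t \<cdot>\<^sub>v unit_vec n k)) $ i"
proof
  define t where "t = - (Q *\<^sub>v v) $ k / Q $$ (k,k)"
  have "0 \<le> Q $$ (k,j) * v $ j" if "j < n" for j
    using Q k mz v_nonneg v_low[of j] that by (cases "j = k") (auto simp: metzler_def)
  then have "0 \<le> (Q *\<^sub>v v) $ k"
    using Q v k by (auto simp: scalar_prod_def intro!: sum_nonneg)
  then show "0 \<le> t"
    using q by (simp add: t_def divide_nonneg_neg)
  fix i assume i: "i < n"
  have Qw: "(Q *\<^sub>v (v + t \<cdot>\<^sub>v unit_vec n k)) $ i = (Q *\<^sub>v v) $ i + t * Q $$ (i,k)"
    using Q v k i by (simp add: mult_add_distrib_mat_vec mult_mat_vec)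
  show "0 \<le> (Q *\<^sub>v (v + t \<cdot>\<^sub>v unit_vec n k)) $ i"
  proof (cases i k rule: linorder_cases)
    case less
    have "(Q *\<^sub>v v) $ i = - v $ i"
      using cl Q v i less by (intro mult_mat_vec_minus_unit_row[OF Q]) (auto simp: cleared_upto_def)
    then show ?thesis
      using Qw cl Q less k v_low by (auto simp: cleared_upto_def)
  next
    case equal
    then show ?thesis
      using Qw q by (simp add: t_def)
  next
    case greater
    have "(Q *\<^sub>v (v + t \<cdot>\<^sub>v unit_vec n k)) $ i = (schur_step Q k *\<^sub>v v) $ i"
      using Qw index_schur_step_mult_vec[OF Q v v_low greater i] by (simp add: t_def algebra_simps)
    then show ?thesis
      using Sv_nonneg[OF greater i] by simp
  qed
qed

lemma no_nonneg_supersolution_schur_step: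
  assumes Q: "Q \<in> carrier_mat n n" and k: "k < n" and cl: "cleared_upto k Q"
    and mz: "metzler Q" and q: "Q $$ (k,k) < 0" and ns: "no_nonneg_supersolution Q"
  shows "no_nonneg_supersolution (schur_step Q k)"
  unfolding no_nonneg_supersolution_def
proof (intro ballI impI)
  let ?S = "schur_step Q k"
  have S: "?S \<in> carrier_mat n n"
    using Q by (simp add: schur_step_def)
  fix v assume "v \<in> carrier_vec (dim_col ?S)" and "\<forall>j<dim_col ?S. 0 \<le> v $ j"
    and "\<forall>i<dim_row ?S. 0 \<le> (?S *\<^sub>v v) $ i"
  then have v: "v \<in> carrier_vec n" and v_nonneg: "\<And>j. j < n \<Longrightarrow> 0 \<le> v $ j"
    and Sv_nonneg: "\<And>i. i < n \<Longrightarrow> 0 \<le> (?S *\<^sub>v v) $ i"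
    using S by auto
  have v_low: "v $ i = 0" if "i \<le> k" for i
  proof -
    have "(?S *\<^sub>v v) $ i = - v $ i"
      using that k Q v by (intro mult_mat_vec_minus_unit_row[OF S]) (auto simp: schur_step_def)
    then show ?thesis
      using Sv_nonneg[of i] v_nonneg[of i] that k by simp
  qed
  obtain t where t: "0 \<le> t" and Qw: "\<And>i. i < n \<Longrightarrow> 0 \<le> (Q *\<^sub>v (v + t \<cdot>\<^sub>v unit_vec n k)) $ i"
    using schur_step_supersolution_lift[OF Q k cl mz q v v_nonneg v_low] Sv_nonneg by blast
  have w: "v + t \<cdot>\<^sub>v unit_vec n k = 0\<^sub>v n"
    using v k t v_nonneg Qw by (intro no_nonneg_supersolutionD[OF ns Q]) auto
  have "v $ j = 0" if "j < n" for j
  proof (cases "j = k")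
    case False
    then have "v $ j = (v + t \<cdot>\<^sub>v unit_vec n k) $ j"
      using that k v by simp
    then show ?thesis
      using w that by simp
  qed (simp add: v_low)
  then show "v = 0\<^sub>v (dim_col ?S)"
    using v S by (intro eq_vecI) auto
qed

text \<open>Scaling by \<open>1 / sqrt (- Q $$ (k,k))\<close> on both sides normalises the pivot to \<open>-1\<close>,
  so that for symmetric \<open>Q\<close> the right factor is the transpose of the left one.\<close>

definition elim_factor :: "real mat \<Rightarrow> nat \<Rightarrow> real mat" where
  "elim_factor Q k = mat (dim_row Q) (dim_row Q) (\<lambda>(i,l).
     if i = l then (if i = k then 1 / sqrt (- Q $$ (k,k)) else 1)
     else if l = k \<and> k < i then - Q $$ (i,k) / Q $$ (k,k) else 0)"

lemma index_elim_factor_mult: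
  assumes "Q \<in> carrier_mat n n" "N \<in> carrier_mat n m" "k < n" "i < n" "j < m"
  shows "(elim_factor Q k * N) $$ (i,j) =
    (if i = k then N $$ (k,j) / sqrt (- Q $$ (k,k)) else N $$ (i,j))
    - (if k < i then Q $$ (i,k) / Q $$ (k,k) * N $$ (k,j) else 0)"
proof -
  have "(elim_factor Q k * N) $$ (i,j) = (\<Sum>l\<in>{0..<n}. elim_factor Q k $$ (i,l) * N $$ (l,j))"
    using assms by (simp add: elim_factor_def scalar_prod_def)
  also have "\<dots> = (\<Sum>l\<in>{0..<n}.
      (if l = i then (if i = k then 1 / sqrt (- Q $$ (k,k)) else 1) * N $$ (l,j) else 0)
      + (if l = k then (if k < i then - Q $$ (i,k) / Q $$ (k,k) * N $$ (l,j) else 0) else 0))"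
    using assms by (intro sum.cong) (auto simp: elim_factor_def)
  also have "\<dots> = (if i = k then N $$ (k,j) / sqrt (- Q $$ (k,k)) else N $$ (i,j))
    - (if k < i then Q $$ (i,k) / Q $$ (k,k) * N $$ (k,j) else 0)"
    using assms by (simp add: sum.distrib)
  finally show ?thesis .
qed

lemma elim_factor_nonneg_lower_tri:
  assumes Q: "Q \<in> carrier_mat n n" and "metzler Q" "k < n" "Q $$ (k,k) < 0"
  shows "nonneg_lower_tri n (elim_factor Q k)"
proof -
  have L: "elim_factor Q k \<in> carrier_mat n n" and lt: "lower_triangular (elim_factor Q k)"
    using Q by (auto simp: elim_factor_def lower_triangular_def)
  moreover have "nonneg_mat (elim_factor Q k)"
    using assms by (auto simp: elim_factor_def nonneg_mat_def metzler_def intro!: divide_nonneg_neg)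
  moreover have "0 < det (elim_factor Q k)"
    using assms by (intro det_lower_triangular_pos[OF L lt]) (auto simp: elim_factor_def)
  ultimately show ?thesis
    by (simp add: nonneg_lower_tri_def)
qed

lemma elim_factor_schur_step:
  assumes Q: "Q \<in> carrier_mat n n" and k: "k < n" and cl: "cleared_upto k Q"
    and q: "Q $$ (k,k) < 0"
  shows "elim_factor Q k * Q * (elim_factor Q\<^sup>T k)\<^sup>T = schur_step Q k"
proof -
  define L where "L = elim_factor Q k"
  define R where "R = elim_factor Q\<^sup>T k"
  have L: "L \<in> carrier_mat n n" and R: "R \<in> carrier_mat n n" and LQ: "L * Q \<in> carrier_mat n n"
    using Q by (auto simp: L_def R_def elim_factor_def)
  have "L * Q * R\<^sup>T = (R * (L * Q)\<^sup>T)\<^sup>T"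
    using transpose_mult[OF R, of "(L * Q)\<^sup>T" n] LQ by simp
  also have "\<dots> = schur_step Q k"
  proof (rule eq_matI)
    have root: "sqrt (- Q $$ (k,k)) * sqrt (- Q $$ (k,k)) = - Q $$ (k,k)"
      using q by simp
    fix i j assume "i < dim_row (schur_step Q k)" "j < dim_col (schur_step Q k)"
    then have i: "i < n" and j: "j < n"
      using Q by (auto simp: schur_step_def)
    have LQ_ij: "(L * Q) $$ (i',j') = (if i' = k then Q $$ (k,j') / sqrt (- Q $$ (k,k)) else Q $$ (i',j'))
        - (if k < i' then Q $$ (i',k) / Q $$ (k,k) * Q $$ (k,j') else 0)" if "i' < n" "j' < n" for i' j'
      unfolding L_def using index_elim_factor_mult[OF Q Q k that] .
    have "(R * (L * Q)\<^sup>T)\<^sup>T $$ (i,j) = (R * (L * Q)\<^sup>T) $$ (j,i)"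
      using L Q R i j by (simp del: index_mult_mat(1))
    also have "\<dots> = (if j = k then (L * Q) $$ (i,k) / sqrt (- Q $$ (k,k)) else (L * Q) $$ (i,j))
        - (if k < j then Q $$ (k,j) / Q $$ (k,k) * (L * Q) $$ (i,k) else 0)"
      unfolding R_def using index_elim_factor_mult[of "Q\<^sup>T" n "(L * Q)\<^sup>T" n k j i] Q L LQ k i j
      by (simp del: index_mult_mat(1))
    also have "\<dots> = schur_step Q k $$ (i,j)"
      using i j k q root cl Q unfolding LQ_ij[OF i j] LQ_ij[OF i k]
      by (cases i k rule: linorder_cases; cases j k rule: linorder_cases)
        (auto simp: schur_step_def cleared_upto_def field_simps)
    finally show "(R * (L * Q)\<^sup>T)\<^sup>T $$ (i,j) = schur_step Q k $$ (i,j)" .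
  qed (use Q L R in \<open>auto simp: schur_step_def\<close>)
  finally show ?thesis
    by (simp add: L_def R_def)
qed

lemma factorization_from_cleared:
  assumes "Q \<in> carrier_mat n n" "k \<le> n" "cleared_upto k Q" "metzler Q" "no_nonneg_supersolution Q"
  shows "\<exists>L R. nonneg_lower_tri n L \<and> nonneg_lower_tri n R \<and> L * Q * R\<^sup>T = - 1\<^sub>m n \<and>
    (Q\<^sup>T = Q \<longrightarrow> R = L)"
  using assms
proof (induction "n - k" arbitrary: k Q)
  case 0
  then have "Q = - 1\<^sub>m n"
    by (intro cleared_upto_all) auto
  then show ?case
    using nonneg_lower_tri_one[of n] by (intro exI[of _ "1\<^sub>m n"]) auto
next
  case (Suc m k Q)
  have Q: "Q \<in> carrier_mat n n" and k: "k < n"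
    using Suc by auto
  have q: "Q $$ (k,k) < 0"
    using Suc.prems metzler_diag_neg[OF Q k] by blast
  define L1 where "L1 = elim_factor Q k"
  define R1 where "R1 = elim_factor Q\<^sup>T k"
  have L1: "nonneg_lower_tri n L1"
    using Suc.prems q k by (auto simp: L1_def intro!: elim_factor_nonneg_lower_tri)
  have R1: "nonneg_lower_tri n R1"
    using Suc.prems q k by (auto simp: R1_def intro!: elim_factor_nonneg_lower_tri)
  have step: "L1 * Q * R1\<^sup>T = schur_step Q k"
    using elim_factor_schur_step[OF Q k] Suc.prems q by (simp add: L1_def R1_def)
  have "m = n - Suc k" "Suc k \<le> n" "schur_step Q k \<in> carrier_mat n n"
    using Suc.hyps(2) k Q by (auto simp: schur_step_def)
  moreover have "metzler (schur_step Q k)"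
    using Suc.prems q k by (intro metzler_schur_step) auto
  moreover have "no_nonneg_supersolution (schur_step Q k)"
    using Suc.prems q by (intro no_nonneg_supersolution_schur_step[OF Q k])
  ultimately have "\<exists>L R. nonneg_lower_tri n L \<and> nonneg_lower_tri n R \<and>
    L * schur_step Q k * R\<^sup>T = - 1\<^sub>m n \<and> ((schur_step Q k)\<^sup>T = schur_step Q k \<longrightarrow> R = L)"
    using Suc.hyps(1)[of "Suc k" "schur_step Q k"] cleared_upto_schur_step by blast
  then obtain L2 R2 where L2: "nonneg_lower_tri n L2" and R2: "nonneg_lower_tri n R2"
    and fac2: "L2 * schur_step Q k * R2\<^sup>T = - 1\<^sub>m n"
    and sym2: "(schur_step Q k)\<^sup>T = schur_step Q k \<longrightarrow> R2 = L2"
    by blast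
  have "(L2 * L1) * Q * (R2 * R1)\<^sup>T = L2 * (L1 * Q * R1\<^sup>T) * R2\<^sup>T"
    using L1 R1 L2 R2 Q by (intro mult_transpose_mult_assoc) (auto simp: nonneg_lower_tri_def)
  also have "\<dots> = - 1\<^sub>m n"
    using step fac2 by simp
  finally have "(L2 * L1) * Q * (R2 * R1)\<^sup>T = - 1\<^sub>m n" .
  moreover have "R2 * R1 = L2 * L1" if "Q\<^sup>T = Q"
    using that sym2 schur_step_transpose[of Q k] by (simp add: L1_def R1_def)
  ultimately show ?case
    using nonneg_lower_tri_mult L1 R1 L2 R2 by blast
qed

lemma neg_M_matrix_triangular_factorization:
  assumes Q: "Q \<in> carrier_mat n n" and "metzler Q" "no_nonneg_supersolution Q"
  shows "(\<exists>A B. A \<in> carrier_mat n n \<and> B \<in> carrier_mat n n \<and>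
            lower_triangular A \<and> upper_triangular B \<and>
            nonneg_mat A \<and> nonneg_mat B \<and> det A > 0 \<and> det B > 0 \<and>
            A * Q * B = - 1\<^sub>m n) \<and>
         (Q\<^sup>T = Q \<longrightarrow>
            (\<exists>A. A \<in> carrier_mat n n \<and> lower_triangular A \<and> upper_triangular A\<^sup>T \<and>
                 nonneg_mat A \<and> nonneg_mat A\<^sup>T \<and> det A > 0 \<and> det A\<^sup>T > 0 \<and>
                 A * Q * A\<^sup>T = - 1\<^sub>m n))"
    (is "?general \<and> ?symmetric")
proof
  obtain L R where L: "nonneg_lower_tri n L" and R: "nonneg_lower_tri n R"
    and fac: "L * Q * R\<^sup>T = - 1\<^sub>m n" and sym: "Q\<^sup>T = Q \<longrightarrow> R = L"
    using factorization_from_cleared[of Q n 0] assms by (auto simp: cleared_upto_def)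
  show ?general
    using L fac nonneg_lower_tri_transpose[OF R] unfolding nonneg_lower_tri_def by blast
  show ?symmetric
  proof
    assume "Q\<^sup>T = Q"
    then have "L * Q * L\<^sup>T = - 1\<^sub>m n"
      using sym fac by simp
    then show "\<exists>A. A \<in> carrier_mat n n \<and> lower_triangular A \<and> upper_triangular A\<^sup>T \<and>
                 nonneg_mat A \<and> nonneg_mat A\<^sup>T \<and> det A > 0 \<and> det A\<^sup>T > 0 \<and>
                 A * Q * A\<^sup>T = - 1\<^sub>m n"
      using L nonneg_lower_tri_transpose[OF L] unfolding nonneg_lower_tri_def by blast
  qed
qed

lemma pairing_mat_mult_vec:
  fixes e :: "nat \<Rightarrow> 'w::real_vector" and \<phi> :: "nat \<Rightarrow> 'w \<Rightarrow> real"
  assumes "\<And>i. i < n \<Longrightarrow> linear (\<phi> i)" "i < n"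
  shows "(mat n n (\<lambda>(i,j). \<phi> i (e j)) *\<^sub>v vec n c) $ i = \<phi> i (\<Sum>j<n. c j *\<^sub>R e j)"
  using assms by (simp add: linear_sum linear_scale o_def scalar_prod_def atLeast0LessThan mult.commute)

lemma no_nonneg_supersolution_pairing_mat:
  fixes e :: "nat \<Rightarrow> 'w::real_vector" and \<phi> :: "nat \<Rightarrow> 'w \<Rightarrow> real"
  assumes lin: "\<And>i. i < n \<Longrightarrow> linear (\<phi> i)"
    and pointed: "\<And>c. (\<forall>i<n. c i \<ge> 0) \<Longrightarrow> (\<Sum>i<n. c i *\<^sub>R e i) = 0 \<Longrightarrow> \<forall>i<n. c i = 0"
    and cone: "\<And>x. x \<in> {\<Sum>i<n. c i *\<^sub>R e i | c. \<forall>i<n. c i \<ge> 0} \<Longrightarrow>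
               (\<forall>i<n. \<phi> i x \<ge> 0) \<Longrightarrow> x = 0"
  shows "no_nonneg_supersolution (mat n n (\<lambda>(i,j). \<phi> i (e j)))"
  unfolding no_nonneg_supersolution_def
proof (intro ballI impI)
  let ?Q = "mat n n (\<lambda>(i,j). \<phi> i (e j))"
  fix v assume vc: "v \<in> carrier_vec (dim_col ?Q)" and v_nonneg: "\<forall>j<dim_col ?Q. 0 \<le> v $ j"
    and Qv_nonneg: "\<forall>i<dim_row ?Q. 0 \<le> (?Q *\<^sub>v v) $ i"
  have v: "v = vec n (\<lambda>j. v $ j)"
    using vc by (intro eq_vecI) auto
  define x where "x = (\<Sum>j<n. v $ j *\<^sub>R e j)"
  have "(?Q *\<^sub>v v) $ i = \<phi> i x" if "i < n" for i
    using pairing_mat_mult_vec[where \<phi> = \<phi> and e = e and c = "\<lambda>j. v $ j", OF lin that]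
    unfolding x_def by (simp only: v[symmetric])
  then have "\<phi> i x \<ge> 0" if "i < n" for i
    using Qv_nonneg that by fastforce
  moreover have "x \<in> {\<Sum>i<n. c i *\<^sub>R e i | c. \<forall>i<n. c i \<ge> 0}"
    using v_nonneg unfolding x_def by (intro CollectI exI[of _ "\<lambda>j. v $ j"]) simp
  ultimately have "x = 0"
    using cone by blast
  then have "(\<Sum>j<n. v $ j *\<^sub>R e j) = 0"
    by (simp only: x_def)
  moreover have "\<forall>j<n. 0 \<le> v $ j"
    using v_nonneg by simp
  ultimately have "\<forall>j<n. v $ j = 0"
    using pointed[of "\<lambda>j. v $ j"] by blast
  then show "v = 0\<^sub>v (dim_col ?Q)"
    using vc by (intro eq_vecI) auto
qed

lemma pairing_mat_kernel_trivial:
  fixes e :: "nat \<Rightarrow> 'w::real_vector" and \<phi> :: "nat \<Rightarrow> 'w \<Rightarrow> real"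
  assumes lin: "\<And>i. i < n \<Longrightarrow> linear (\<phi> i)" and det: "det (mat n n (\<lambda>(i,j). \<phi> i (e j))) \<noteq> 0"
    and ker: "\<forall>i<n. \<phi> i (\<Sum>j<n. c j *\<^sub>R e j) = 0" and j: "j < n"
  shows "c j = 0"
proof -
  let ?Q = "mat n n (\<lambda>(i,j). \<phi> i (e j))"
  have "?Q *\<^sub>v vec n c = 0\<^sub>v n"
    using ker pairing_mat_mult_vec[where \<phi> = \<phi> and e = e and c = c, OF lin] by (intro eq_vecI) auto
  then have "vec n c = 0\<^sub>v n"
    using det det_0_iff_vec_prod_zero[OF mat_carrier] vec_carrier[of n c] by blast
  then show ?thesis
    using j by (metis index_vec index_zero_vec(1))
qed

theorem lemma1p2p3:
  fixes n :: nat
    and e :: "nat \<Rightarrow> 'w::real_vector"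
    and \<phi> :: "nat \<Rightarrow> 'w \<Rightarrow> real"
  assumes lin: "\<And>i. i < n \<Longrightarrow> linear (\<phi> i)"
    and a: "\<And>c. (\<forall>i<n. c i \<ge> 0) \<Longrightarrow> (\<Sum>i<n. c i *\<^sub>R e i) = 0 \<Longrightarrow> \<forall>i<n. c i = 0"
    and b: "\<And>i j. i < n \<Longrightarrow> j < n \<Longrightarrow> i \<noteq> j \<Longrightarrow> \<phi> i (e j) \<ge> 0"
    and c: "\<And>x. x \<in> {\<Sum>i<n. c i *\<^sub>R e i | c. \<forall>i<n. c i \<ge> 0} \<Longrightarrow>
               (\<forall>i<n. \<phi> i x \<ge> 0) \<Longrightarrow> x = 0"
  shows "(let Q = mat n n (\<lambda>(i,j). \<phi> i (e j)) in
            (\<exists>A B. A \<in> carrier_mat n n \<and> B \<in> carrier_mat n n \<and>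
                   lower_triangular A \<and> upper_triangular B \<and>
                   nonneg_mat A \<and> nonneg_mat B \<and> det A > 0 \<and> det B > 0 \<and>
                   A * Q * B = - 1\<^sub>m n) \<and>
            (transpose_mat Q = Q \<longrightarrow>
              (\<exists>A. A \<in> carrier_mat n n \<and> lower_triangular A \<and>
                   upper_triangular (transpose_mat A) \<and>
                   nonneg_mat A \<and> nonneg_mat (transpose_mat A) \<and>
                   det A > 0 \<and> det (transpose_mat A) > 0 \<and>
                   A * Q * transpose_mat A = - 1\<^sub>m n)))
         \<and> (\<forall>c. (\<Sum>j<n. c j *\<^sub>R e j) \<in> {x. \<forall>i<n. \<phi> i x = 0} \<longrightarrow> (\<forall>j<n. c j = 0))"
proof -
  define Q where "Q = mat n n (\<lambda>(i,j). \<phi> i (e j))"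
  have Q: "Q \<in> carrier_mat n n"
    by (simp add: Q_def)
  have Q_metzler: "metzler Q"
    using b by (auto simp: metzler_def Q_def)
  have Q_no_supersolution: "no_nonneg_supersolution Q"
    unfolding Q_def using lin a c by (rule no_nonneg_supersolution_pairing_mat)
  note factorization = neg_M_matrix_triangular_factorization[OF Q Q_metzler Q_no_supersolution]
  then obtain A B where "A \<in> carrier_mat n n" "B \<in> carrier_mat n n" "A * Q * B = - 1\<^sub>m n"
    by blast
  then have "det (mat n n (\<lambda>(i,j). \<phi> i (e j))) \<noteq> 0"
    using det_nonzero_of_factorization[OF _ Q] by (simp add: Q_def)
  then have "\<forall>c. (\<Sum>j<n. c j *\<^sub>R e j) \<in> {x. \<forall>i<n. \<phi> i x = 0} \<longrightarrow> (\<forall>j<n. c j = 0)"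
    using pairing_mat_kernel_trivial[where \<phi> = \<phi>, OF lin] by blast
  with factorization show ?thesis
    unfolding Let_def Q_def[symmetric] ..
qed

end
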